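(* Let $X$ be a finite set with $|X|\ge2$ and $f:2^X\to\mathbb{R}_{\ge0}$ a normalized monotone submodular function possessing supermodularity of conditioning, with $f(x)>0$ for all $x\in X$. Then for all $S\subseteq X$ and $x\in X\setminus S$, \[ f(x\mid S)\ \ge\ \underline f(x\mid S)\ \ge\ f(x)\big(1-|S|\,\tau_2\big), \qquad\text{and hence}\qquad f(x\mid S)\ \ge\ f(x)\big(1-\min\{|S|\tau_2,1\}\big). \]
   Context: $f(x\mid A):=f(A\cup\{x\})-f(A)$, $f(x):=f(\{x\})$, $f(x\mid y):=f(x\mid\{y\})$. Pairwise lower estimate: $\underline f(x\mid S):=f(x)-\sum_{y\in S}(f(x)-f(x\mid y))$. The 2-cardinality curvature is $\tau_2:=1-\min_{x\in X,\ y\in X\setminus\{x\}} f(x\mid y)/f(x)$. Supermodularity of conditioning: for all $S\subseteq X$, $A\subseteq B\subseteq X$ and $C\subseteq X\setminus B$, $f(S\mid A)-f(S\mid A\cup C)\ge f(S\mid B)-f(S\mid B\cup C)$, where $f(T\mid A):=f(A\cup T)-f(A)$. *)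

theory Defs
  imports "HOL-Analysis.Analysis"
begin

text \<open>Set functions f : 2^X \<rightarrow> R on a ground set X, represented as functions on 'a set,
  only their values on subsets of X matter.\<close>

definition marg :: "('a set \<Rightarrow> real) \<Rightarrow> 'a set \<Rightarrow> 'a set \<Rightarrow> real" where
  "marg f T A = f (A \<union> T) - f A"

definition normalized :: "('a set \<Rightarrow> real) \<Rightarrow> bool" where
  "normalized f \<longleftrightarrow> f {} = 0"

definition nonneg_on :: "'a set \<Rightarrow> ('a set \<Rightarrow> real) \<Rightarrow> bool" where
  "nonneg_on X f \<longleftrightarrow> (\<forall>A. A \<subseteq> X \<longrightarrow> f A \<ge> 0)"

definition monotone_setfun :: "'a set \<Rightarrow> ('a set \<Rightarrow> real) \<Rightarrow> bool" where
  "monotone_setfun X f \<longleftrightarrow> (\<forall>A B. A \<subseteq> B \<and> B \<subseteq> X \<longrightarrow> f A \<le> f B)"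

definition submodular :: "'a set \<Rightarrow> ('a set \<Rightarrow> real) \<Rightarrow> bool" where
  "submodular X f \<longleftrightarrow>
     (\<forall>A B. A \<subseteq> X \<and> B \<subseteq> X \<longrightarrow> f (A \<union> B) + f (A \<inter> B) \<le> f A + f B)"

definition supermod_conditioning :: "'a set \<Rightarrow> ('a set \<Rightarrow> real) \<Rightarrow> bool" where
  "supermod_conditioning X f \<longleftrightarrow>
     (\<forall>S A B C. S \<subseteq> X \<and> A \<subseteq> B \<and> B \<subseteq> X \<and> C \<subseteq> X - B \<longrightarrow>
        marg f S A - marg f S (A \<union> C) \<ge> marg f S B - marg f S (B \<union> C))"

definition lower_est :: "('a set \<Rightarrow> real) \<Rightarrow> 'a \<Rightarrow> 'a set \<Rightarrow> real" where
  "lower_est f x S = f {x} - (\<Sum>y\<in>S. f {x} - marg f {x} {y})"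

definition tau2 :: "'a set \<Rightarrow> ('a set \<Rightarrow> real) \<Rightarrow> real" where
  "tau2 X f = 1 - Min {marg f {x} {y} / f {x} | x y. x \<in> X \<and> y \<in> X - {x}}"

end

theory Submission
  imports Defs
begin

text \<open>Supermodularity of conditioning with \<open>A = {}\<close> and \<open>C = {y}\<close> says that adding \<open>y\<close>
  to any base set lowers the marginal gain of \<open>x\<close> by at most \<open>f(x) - f(x|y)\<close>; adding the
  elements of \<open>S\<close> one at a time yields the pairwise lower estimate. By the definition of
  \<open>\<tau>\<^sub>2\<close> each of the \<open>|S|\<close> losses is at most \<open>\<tau>\<^sub>2 f(x)\<close>, and monotonicity
  (\<open>f(x|S) \<ge> 0\<close>) caps the resulting bound at \<open>0\<close>.\<close>

lemma marg_ge_lower_est: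
  assumes "finite S" and "S \<subseteq> X" and "x \<in> X - S"
    and "normalized f" and "supermod_conditioning X f"
  shows "marg f {x} S \<ge> lower_est f x S"
  using assms(1-3)
proof (induction S rule: finite_induct)
  case empty
  then show ?case using \<open>normalized f\<close> by (simp add: marg_def lower_est_def normalized_def)
next
  case (insert y T)
  have "{x} \<subseteq> X" "{} \<subseteq> T" "T \<subseteq> X" "{y} \<subseteq> X - T"
    using insert.prems insert.hyps by auto
  then have "marg f {x} {} - marg f {x} ({} \<union> {y}) \<ge> marg f {x} T - marg f {x} (T \<union> {y})"
    using \<open>supermod_conditioning X f\<close> unfolding supermod_conditioning_def by blast
  then have loss: "marg f {x} T - marg f {x} (insert y T) \<le> f {x} - marg f {x} {y}"
    using \<open>normalized f\<close> by (simp add: marg_def normalized_def)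
  have "lower_est f x (insert y T) = lower_est f x T - (f {x} - marg f {x} {y})"
    using insert.hyps by (simp add: lower_est_def)
  moreover have "marg f {x} T \<ge> lower_est f x T"
    using insert.IH insert.prems by blast
  ultimately show ?case using loss by linarith
qed

lemma marg_singleton_ge_tau2:
  assumes "finite X" and "x \<in> X" and "y \<in> X - {x}" and "f {x} > 0"
  shows "marg f {x} {y} \<ge> f {x} * (1 - tau2 X f)"
proof -
  define M where "M = {marg f {x} {y} / f {x} | x y. x \<in> X \<and> y \<in> X - {x}}"
  have "M \<subseteq> (\<lambda>(x, y). marg f {x} {y} / f {x}) ` (X \<times> X)"
    unfolding M_def by auto
  then have "finite M" using \<open>finite X\<close> finite_subset by blast
  moreover have "marg f {x} {y} / f {x} \<in> M" unfolding M_def using assms(2,3) by blast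
  ultimately have "Min M \<le> marg f {x} {y} / f {x}" by simp
  then show ?thesis
    using \<open>f {x} > 0\<close> unfolding tau2_def M_def[symmetric] by (simp add: field_simps)
qed

lemma lower_est_ge_tau2:
  assumes "finite X" and "S \<subseteq> X" and "x \<in> X - S" and "f {x} > 0"
  shows "lower_est f x S \<ge> f {x} * (1 - real (card S) * tau2 X f)"
proof -
  have "(\<Sum>y\<in>S. f {x} - marg f {x} {y}) \<le> (\<Sum>y\<in>S. f {x} * tau2 X f)"
  proof (rule sum_mono)
    fix y assume "y \<in> S"
    with assms have "marg f {x} {y} \<ge> f {x} * (1 - tau2 X f)"
      by (intro marg_singleton_ge_tau2) auto
    then show "f {x} - marg f {x} {y} \<le> f {x} * tau2 X f" by (simp add: algebra_simps)
  qed
  then show ?thesis unfolding lower_est_def by (simp add: algebra_simps)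
qed

lemma marg_nonneg:
  assumes "monotone_setfun X f" and "A \<union> T \<subseteq> X"
  shows "marg f T A \<ge> 0"
  using assms unfolding monotone_setfun_def marg_def by auto

theorem mainTheorem7:
  fixes X :: "'a set" and f :: "'a set \<Rightarrow> real"
  assumes "finite X" and "card X \<ge> 2"
    and "nonneg_on X f" and "normalized f" and "monotone_setfun X f" and "submodular X f"
    and "supermod_conditioning X f"
    and "\<forall>x\<in>X. f {x} > 0"
  shows "\<forall>S x. S \<subseteq> X \<and> x \<in> X - S \<longrightarrow>
           marg f {x} S \<ge> lower_est f x S \<and>
           lower_est f x S \<ge> f {x} * (1 - real (card S) * tau2 X f) \<and>
           marg f {x} S \<ge> f {x} * (1 - min (real (card S) * tau2 X f) 1)"
proof (intro allI impI)
  fix S x assume Sx: "S \<subseteq> X \<and> x \<in> X - S"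
  then have "finite S" using \<open>finite X\<close> finite_subset by blast
  have lower: "marg f {x} S \<ge> lower_est f x S"
    using Sx by (intro marg_ge_lower_est[OF \<open>finite S\<close> _ _ assms(4,7)]) auto
  have tau: "lower_est f x S \<ge> f {x} * (1 - real (card S) * tau2 X f)"
    using Sx assms(8) by (intro lower_est_ge_tau2[OF \<open>finite X\<close>]) auto
  have "marg f {x} S \<ge> 0" using Sx by (intro marg_nonneg[OF assms(5)]) auto
  then have "marg f {x} S \<ge> f {x} * (1 - min (real (card S) * tau2 X f) 1)"
    using lower tau by (cases "real (card S) * tau2 X f \<le> 1") (auto simp: min_def)
  with lower tau show "marg f {x} S \<ge> lower_est f x S \<and>
           lower_est f x S \<ge> f {x} * (1 - real (card S) * tau2 X f) \<and>
           marg f {x} S \<ge> f {x} * (1 - min (real (card S) * tau2 X f) 1)"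
    by blast
qed

end
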